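(* Let $M$ be an $\widehat{\mathrm{FI}}$-module with generation degree $\le a$. Then $\Sigma^{a+2}M$ is an $\mathrm{FI}$-module.
   Context: $\widehat{\mathrm S}_n=\{(\sigma,d)\in\mathrm S_n\times\mathbb Z: d\text{ odd}\iff\operatorname{sgn}\sigma=-1\}$ ($n\ge2$; trivial for $n=0,1$). $\widehat{\mathrm{FI}}$: objects $n\in\mathbb N$, $\widehat{\mathrm{FI}}(n,m)=\widehat{\mathrm S}_m/i_2(\widehat{\mathrm S}_{m-n})$ ($i_1,i_2$ inclusions on first/last letters), composition $([s],[t])\mapsto[t\,i_1(s)]$; it carries a monoidal structure with $n\oplus m=n+m$, defined on morphisms via $i_1,i_2$ and a braiding coming from $\mathrm{Br}_n\to\widehat{\mathrm S}_n$, $\sigma_{i,i+1}\mapsto((i\ i{+}1),1)$; on automorphisms, $-\oplus 1$ is $i_1:\widehat{\mathrm S}_n\to\widehat{\mathrm S}_{n+1}$. $\Sigma M$ is the restriction of $M$ along $-\oplus1$, so $(\Sigma M)_n=M_{n+1}$. Generation degree $\le a$: $M$ is a quotient of $\mathbf I(W)$, $\mathbf I(W)_m=\bigoplus_{n\le m}\mathbb Z[\widehat{\mathrm{FI}}(n,m)]\otimes_{\mathbb Z\widehat{\mathrm S}_n}W_n$, with $W_n=0$ for $n>a$. An $\widehat{\mathrm{FI}}$-module is an $\mathrm{FI}$-module if it factors through $\widehat{\mathrm{FI}}\to\mathrm{FI}$ (induced by $\widehat{\mathrm S}_m\to\mathrm S_m$). *)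

theory Defs
  imports "HOL-Combinatorics.Permutations"
begin

text \<open>Elements of the groups S^_n are encoded as pairs (sigma, d), where sigma is a
  permutation of {0..<n} (identity outside) and d is an integer.\<close>

type_synonym shat = "(nat \<Rightarrow> nat) \<times> int"

definition Shat :: "nat \<Rightarrow> shat set" where
  "Shat n = (if n \<le> 1 then {(id, 0)}
             else {(\<sigma>, d). \<sigma> permutes {..<n} \<and> (odd d \<longleftrightarrow> sign \<sigma> = -1)})"

definition hmult :: "shat \<Rightarrow> shat \<Rightarrow> shat" where
  "hmult s t = (fst s \<circ> fst t, snd s + snd t)"

text \<open>i_1 : S^_n -> S^_m (first letters) is the identity on this encoding.
  i_2 : S^_k -> S^_m (last letters, k <= m):\<close>

definition i2 :: "nat \<Rightarrow> nat \<Rightarrow> shat \<Rightarrow> shat" where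
  "i2 m k s = ((\<lambda>i. if i < m - k then i else fst s (i - (m - k)) + (m - k)), snd s)"

text \<open>The left coset s * i_2(S^_{m-n}) in S^_m, i.e. the morphism [s] : n -> m.\<close>

definition hcoset :: "nat \<Rightarrow> nat \<Rightarrow> shat \<Rightarrow> shat set" where
  "hcoset m n s = {hmult s (i2 m (m - n) h) | h. h \<in> Shat (m - n)}"

definition FIhat :: "nat \<Rightarrow> nat \<Rightarrow> shat set set" where
  "FIhat n m = (if n \<le> m then {hcoset m n s | s. s \<in> Shat m} else {})"

text \<open>An FI^-module: abelian groups V n (subgroups of an ambient abelian group type)
  and additive maps F n m f : V n -> V m for f in FI^(n,m), functorial, where the composite
  of [s] : n -> m and [t] : m -> l is [t i_1(s)].\<close>

definition FIhat_module ::
  "(nat \<Rightarrow> 'v::ab_group_add set) \<Rightarrow> (nat \<Rightarrow> nat \<Rightarrow> shat set \<Rightarrow> 'v \<Rightarrow> 'v) \<Rightarrow> bool" where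
  "FIhat_module V F \<longleftrightarrow>
     (\<forall>n. 0 \<in> V n \<and> (\<forall>x\<in>V n. \<forall>y\<in>V n. x + y \<in> V n) \<and> (\<forall>x\<in>V n. - x \<in> V n)) \<and>
     (\<forall>n m f. f \<in> FIhat n m \<longrightarrow>
        (\<forall>x\<in>V n. F n m f x \<in> V m) \<and>
        (\<forall>x\<in>V n. \<forall>y\<in>V n. F n m f (x + y) = F n m f x + F n m f y)) \<and>
     (\<forall>n. \<forall>x\<in>V n. F n n (hcoset n n (id, 0)) x = x) \<and>
     (\<forall>n m l f g s t. f \<in> FIhat n m \<longrightarrow> g \<in> FIhat m l \<longrightarrow> s \<in> f \<longrightarrow> t \<in> g \<longrightarrow>
        (\<forall>x\<in>V n. F n l (hcoset l n (hmult t s)) x = F m l g (F n m f x)))"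

definition zspan :: "'v::ab_group_add set \<Rightarrow> 'v set" where
  "zspan S = \<Inter>{H. S \<subseteq> H \<and> 0 \<in> H \<and> (\<forall>x\<in>H. \<forall>y\<in>H. x + y \<in> H) \<and> (\<forall>x\<in>H. - x \<in> H)}"

text \<open>Generation degree <= a: every V m is generated by images of elements of degree <= a
  (equivalently, M is a quotient of some I(W) with W_n = 0 for n > a).\<close>

definition gen_degree_le ::
  "(nat \<Rightarrow> 'v::ab_group_add set) \<Rightarrow> (nat \<Rightarrow> nat \<Rightarrow> shat set \<Rightarrow> 'v \<Rightarrow> 'v) \<Rightarrow> nat \<Rightarrow> bool" where
  "gen_degree_le V F a \<longleftrightarrow>
     (\<forall>m. V m \<subseteq> zspan {F n m f x | n f x. n \<le> a \<and> f \<in> FIhat n m \<and> x \<in> V n})"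

text \<open>The functor - \<oplus> 1 on morphisms: for [s] : n -> m, [s] \<oplus> id_1 = [i_1(s) (id_n \<oplus> b)]
  where b in S^_{m-n+1} is the image of the braid passing the last strand over the m-n
  strands (permutation cyc n m, degree m - n).\<close>

definition cyc :: "nat \<Rightarrow> nat \<Rightarrow> nat \<Rightarrow> nat" where
  "cyc n m i = (if i = n then m else if n < i \<and> i \<le> m then i - 1 else i)"

definition oplus1 :: "nat \<Rightarrow> nat \<Rightarrow> shat set \<Rightarrow> shat set" where
  "oplus1 n m f = (let s = (SOME s. s \<in> f) in
     hcoset (Suc m) (Suc n) (fst s \<circ> cyc n m, snd s + int (m - n)))"

fun oplusk :: "nat \<Rightarrow> nat \<Rightarrow> nat \<Rightarrow> shat set \<Rightarrow> shat set" where
  "oplusk 0 n m f = f"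
| "oplusk (Suc k) n m f = oplus1 (n + k) (m + k) (oplusk k n m f)"

definition SigmaV :: "nat \<Rightarrow> (nat \<Rightarrow> 'v set) \<Rightarrow> nat \<Rightarrow> 'v set" where
  "SigmaV k V = (\<lambda>n. V (n + k))"

definition SigmaF :: "nat \<Rightarrow> (nat \<Rightarrow> nat \<Rightarrow> shat set \<Rightarrow> 'v \<Rightarrow> 'v) \<Rightarrow> nat \<Rightarrow> nat \<Rightarrow> shat set \<Rightarrow> 'v \<Rightarrow> 'v" where
  "SigmaF k F = (\<lambda>n m f. F (n + k) (m + k) (oplusk k n m f))"

text \<open>An FI^-module is an FI-module if it factors through FI^ -> FI, which sends the coset
  [s] in S^_m / i_2(S^_{m-n}) to its image (fst ` [s]) in S_m / S_{m-n}.\<close>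

definition is_FI_module ::
  "(nat \<Rightarrow> 'v::ab_group_add set) \<Rightarrow> (nat \<Rightarrow> nat \<Rightarrow> shat set \<Rightarrow> 'v \<Rightarrow> 'v) \<Rightarrow> bool" where
  "is_FI_module V F \<longleftrightarrow> FIhat_module V F \<and>
     (\<exists>N. \<forall>n m f. f \<in> FIhat n m \<longrightarrow> (\<forall>x\<in>V n. F n m f x = N n m (fst ` f) x))"

end

theory Submission
  imports Defs
begin

(* The kernel of S^_m -> S_m consists of the central elements z = (id, 2j). Hence two
  morphisms n -> m of FI^ with the same image in FI are [s] and [s z]; applying - \<oplus> 1
  any number of times keeps them in this relation, so Sigma^k of the second one is Sigma^k
  of the first one precomposed with the automorphism z of n + k.
  It remains to see that z acts trivially on M_p for p >= a + 2. The fixed points of z form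
  a subgroup of M_p, and M_p is generated by the images of morphisms [u] : q -> p with
  q <= a. Since p - q >= 2, z = i_2(z) lies in i_2(S^_(p-q)) (this fails for p - q <= 1, as
  S^_0 and S^_1 are trivial), so z [u] = [z u] = [u i_2(z)] = [u]. *)

definition shift_perm :: "nat \<Rightarrow> (nat \<Rightarrow> nat) \<Rightarrow> nat \<Rightarrow> nat" where
  "shift_perm c h = (\<lambda>i. if i < c then i else h (i - c) + c)"

lemma i2_eq_shift_perm: "i2 m k s = (shift_perm (m - k) (fst s), snd s)"
  by (simp add: i2_def shift_perm_def)

lemma shift_perm_id [simp]: "shift_perm c id = id"
  by (auto simp: shift_perm_def fun_eq_iff)

lemma shift_perm_permutes:
  assumes h: "h permutes {..<k}"
  shows "shift_perm c h permutes {..<c + k}"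
proof (rule bij_imp_permutes)
  show "shift_perm c h x = x" if "x \<notin> {..<c + k}" for x
    using that permutes_not_in[OF h, of "x - c"] by (auto simp: shift_perm_def)
  have img: "h i < k" if "i < k" for i
    using permutes_in_image[OF h] that by auto
  have "inj_on (shift_perm c h) {..<c + k}"
  proof (rule inj_onI)
    fix x y assume "x \<in> {..<c + k}" "y \<in> {..<c + k}" "shift_perm c h x = shift_perm c h y"
    moreover have "h (x - c) = h (y - c) \<Longrightarrow> x - c = y - c"
      using permutes_inj[OF h] by (simp add: inj_eq)
    ultimately show "x = y"
      unfolding shift_perm_def by (auto split: if_splits)
  qed
  moreover have "shift_perm c h ` {..<c + k} \<subseteq> {..<c + k}"
    using img by (auto simp: shift_perm_def)
  ultimately show "bij_betw (shift_perm c h) {..<c + k} {..<c + k}"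
    by (simp add: bij_betw_def endo_inj_surj)
qed

lemma swapidseq_shift_perm: "swapidseq n p \<Longrightarrow> swapidseq n (shift_perm c p)"
proof (induction rule: swapidseq.induct)
  case id
  then show ?case by (simp add: id_def [symmetric])
next
  case (comp_Suc n p a b)
  have "shift_perm c (transpose a b \<circ> p) = transpose (a + c) (b + c) \<circ> shift_perm c p"
    by (auto simp: shift_perm_def fun_eq_iff transpose_def)
  moreover have "swapidseq (Suc n) (transpose (a + c) (b + c) \<circ> shift_perm c p)"
    using comp_Suc by (intro swapidseq.comp_Suc) auto
  ultimately show ?case
    by (simp only: comp_def)
qed

lemma sign_shift_perm: "permutation p \<Longrightarrow> sign (shift_perm c p) = sign p"
  unfolding permutation_def sign_def by (metis evenperm_unique swapidseq_shift_perm)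

lemma hmult_assoc: "hmult (hmult s t) u = hmult s (hmult t u)"
  by (simp add: hmult_def comp_assoc add.assoc)

lemma hmult_id [simp]: "hmult s (id, 0) = s" "hmult (id, 0) s = s"
  by (simp_all add: hmult_def)

definition hinv :: "shat \<Rightarrow> shat" where
  "hinv s = (inv (fst s), - snd s)"

lemma Shat_id [simp]: "(id, 0) \<in> Shat k"
  by (simp add: Shat_def)

lemma Shat_trivial: "k \<le> 1 \<Longrightarrow> s \<in> Shat k \<longleftrightarrow> s = (id, 0)"
  by (auto simp: Shat_def)

lemma Shat_iff:
  "1 < k \<Longrightarrow> s \<in> Shat k \<longleftrightarrow> fst s permutes {..<k} \<and> (odd (snd s) \<longleftrightarrow> sign (fst s) = -1)"
  by (cases s) (auto simp: Shat_def)

lemma Shat_permutes: "s \<in> Shat k \<Longrightarrow> fst s permutes {..<k}"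
  by (auto simp: Shat_def split: if_splits)

lemma Shat_odd_iff_sign: "s \<in> Shat k \<Longrightarrow> odd (snd s) \<longleftrightarrow> sign (fst s) = -1"
  by (cases "k \<le> 1") (auto simp: Shat_trivial Shat_iff)

lemma Shat_permutation: "s \<in> Shat k \<Longrightarrow> permutation (fst s)"
  using Shat_permutes permutes_imp_permutation by blast

lemma hmult_Shat:
  assumes s: "s \<in> Shat k" and t: "t \<in> Shat k"
  shows "hmult s t \<in> Shat k"
proof (cases "k \<le> 1")
  case True
  then show ?thesis using s t by (simp add: Shat_trivial)
next
  case False
  have "sign (fst s \<circ> fst t) = sign (fst s) * sign (fst t)"
    using s t by (simp add: sign_compose Shat_permutation)
  then have "odd (snd s + snd t) \<longleftrightarrow> sign (fst s \<circ> fst t) = -1"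
    using Shat_odd_iff_sign[OF s] Shat_odd_iff_sign[OF t]
    by (cases rule: sign_cases[of "fst s"]; cases rule: sign_cases[of "fst t"]) auto
  then show ?thesis
    using False permutes_compose[OF Shat_permutes[OF t] Shat_permutes[OF s]]
    by (simp add: Shat_iff hmult_def)
qed

lemma hinv_Shat:
  assumes s: "s \<in> Shat k"
  shows "hinv s \<in> Shat k"
proof (cases "k \<le> 1")
  case True
  then show ?thesis using s by (simp add: Shat_trivial hinv_def)
next
  case False
  have "inv (fst s) permutes {..<k}"
    using permutes_inv[OF Shat_permutes[OF s]] .
  moreover have "sign (inv (fst s)) = sign (fst s)"
    using sign_inverse[OF Shat_permutation[OF s]] .
  ultimately show ?thesis
    using False Shat_odd_iff_sign[OF s] by (simp add: Shat_iff hinv_def)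
qed

lemma hmult_hinv: "s \<in> Shat k \<Longrightarrow> hmult s (hinv s) = (id, 0)"
  using permutes_inv_o(1)[OF Shat_permutes] by (simp add: hmult_def hinv_def)

lemma i2_id [simp]: "i2 m k (id, 0) = (id, 0)"
  by (simp add: i2_eq_shift_perm)

lemma i2_hmult: "hmult (i2 m k s) (i2 m k t) = i2 m k (hmult s t)"
  by (auto simp: i2_eq_shift_perm hmult_def shift_perm_def fun_eq_iff)

lemma i2_Shat:
  assumes h: "h \<in> Shat k" and km: "k \<le> m"
  shows "i2 m k h \<in> Shat m"
proof (cases "k \<le> 1")
  case True
  then show ?thesis using h by (simp add: Shat_trivial)
next
  case False
  have "shift_perm (m - k) (fst h) permutes {..<m}"
    using shift_perm_permutes[OF Shat_permutes[OF h], of "m - k"] km by simp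
  moreover have "sign (shift_perm (m - k) (fst h)) = sign (fst h)"
    using sign_shift_perm[OF Shat_permutation[OF h]] .
  ultimately show ?thesis
    using False km Shat_odd_iff_sign[OF h] by (simp add: i2_eq_shift_perm Shat_iff)
qed

lemma hcoset_iff: "u \<in> hcoset m n s \<longleftrightarrow> (\<exists>h\<in>Shat (m - n). u = hmult s (i2 m (m - n) h))"
  unfolding hcoset_def by blast

lemma hcoset_hmult_i2:
  assumes h: "h \<in> Shat (m - n)"
  shows "hcoset m n (hmult s (i2 m (m - n) h)) = hcoset m n s"
proof (intro equalityI subsetI)
  fix u assume "u \<in> hcoset m n (hmult s (i2 m (m - n) h))"
  then obtain h' where h': "h' \<in> Shat (m - n)" "u = hmult (hmult s (i2 m (m - n) h)) (i2 m (m - n) h')"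
    by (auto simp: hcoset_iff)
  then have "u = hmult s (i2 m (m - n) (hmult h h'))"
    by (simp add: hmult_assoc i2_hmult)
  then show "u \<in> hcoset m n s"
    using h h' by (auto simp: hcoset_iff intro: hmult_Shat)
next
  fix u assume "u \<in> hcoset m n s"
  then obtain h' where h': "h' \<in> Shat (m - n)" "u = hmult s (i2 m (m - n) h')"
    by (auto simp: hcoset_iff)
  then have "u = hmult (hmult s (i2 m (m - n) h)) (i2 m (m - n) (hmult (hinv h) h'))"
    using h by (simp add: hmult_assoc i2_hmult hmult_hinv flip: hmult_assoc[of h])
  then show "u \<in> hcoset m n (hmult s (i2 m (m - n) h))"
    using h h' by (auto simp: hcoset_iff intro: hmult_Shat hinv_Shat)
qed

lemma hcoset_self: "s \<in> hcoset m n s"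
  unfolding hcoset_iff by (rule bexI[of _ "(id, 0)"]) simp_all

lemma hcoset_eq_if_mem: "t \<in> hcoset m n s \<Longrightarrow> hcoset m n t = hcoset m n s"
  by (auto simp: hcoset_iff hcoset_hmult_i2)

lemma hcoset_subset_Shat: "s \<in> Shat m \<Longrightarrow> n \<le> m \<Longrightarrow> hcoset m n s \<subseteq> Shat m"
  by (auto simp: hcoset_iff intro!: hmult_Shat i2_Shat)

lemma FIhatE:
  assumes "f \<in> FIhat n m"
  obtains s where "n \<le> m" "s \<in> Shat m" "f = hcoset m n s"
  using assms by (auto simp: FIhat_def split: if_splits)

lemma FIhat_eq_hcoset:
  assumes "f \<in> FIhat n m" and "s \<in> f"
  shows "n \<le> m" "s \<in> Shat m" "f = hcoset m n s"
proof -
  obtain s0 where nm: "n \<le> m" and s0: "s0 \<in> Shat m" and f: "f = hcoset m n s0"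
    using assms(1) by (rule FIhatE)
  show "n \<le> m"
    by (fact nm)
  show "s \<in> Shat m"
    using hcoset_subset_Shat[OF s0 nm] assms(2) f by blast
  show "f = hcoset m n s"
    using hcoset_eq_if_mem assms(2) f by simp
qed

lemma hcoset_in_FIhat:
  assumes "n \<le> m" and "s \<in> Shat m"
  shows "hcoset m n s \<in> FIhat n m"
proof -
  have "hcoset m n s \<in> {hcoset m n t | t. t \<in> Shat m}"
    using assms(2) by blast
  then show ?thesis
    using assms(1) by (simp add: FIhat_def)
qed

lemma cyc_self [simp]: "cyc n n = id"
  by (auto simp: cyc_def fun_eq_iff)

lemma cyc_Suc: "n \<le> m \<Longrightarrow> cyc n (Suc m) = transpose m (Suc m) \<circ> cyc n m"
  by (auto simp: cyc_def fun_eq_iff transpose_def)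

lemma cyc_comp: "n \<le> m \<Longrightarrow> m \<le> l \<Longrightarrow> cyc m l \<circ> cyc n m = cyc n l"
  by (auto simp: cyc_def fun_eq_iff)

lemma cyc_permutes: "n \<le> m \<Longrightarrow> cyc n m permutes {..<Suc m}"
proof (induction m)
  case 0
  then show ?case using permutes_id[of "{..<Suc 0}"] by (simp add: id_def)
next
  case (Suc m)
  show ?case
  proof (cases "n = Suc m")
    case True
    then show ?thesis using permutes_id[of "{..<Suc (Suc m)}"] by (simp add: id_def)
  next
    case False
    then have "cyc n m permutes {..<Suc (Suc m)}"
      using Suc by (auto intro: permutes_subset)
    moreover have "transpose m (Suc m) permutes {..<Suc (Suc m)}"
      by (rule permutes_swap_id) auto
    ultimately show ?thesis
      using False Suc.prems by (subst cyc_Suc) (auto intro: permutes_compose)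
  qed
qed

lemma sign_cyc: "n \<le> m \<Longrightarrow> sign (cyc n m) = (-1) ^ (m - n)"
proof (induction m)
  case 0
  then show ?case by simp
next
  case (Suc m)
  show ?case
  proof (cases "n = Suc m")
    case True
    then show ?thesis by simp
  next
    case False
    then have nm: "n \<le> m" using Suc.prems by simp
    have "permutation (cyc n m)"
      using cyc_permutes[OF nm] permutes_imp_permutation by blast
    then have "sign (transpose m (Suc m) \<circ> cyc n m) = - sign (cyc n m)"
      by (simp add: sign_compose sign_swap_id permutation_swap_id)
    then show ?thesis
      using Suc.IH[OF nm] nm by (subst cyc_Suc[OF nm]) (simp add: Suc_diff_le)
  qed
qed

definition oplus1_rep :: "nat \<Rightarrow> nat \<Rightarrow> shat \<Rightarrow> shat" where
  "oplus1_rep n m s = (fst s \<circ> cyc n m, snd s + int (m - n))"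

lemma oplus1_rep_Shat:
  assumes s: "s \<in> Shat m" and nm: "n \<le> m"
  shows "oplus1_rep n m s \<in> Shat (Suc m)"
proof (cases "m = 0")
  case True
  then show ?thesis using s nm by (simp add: Shat_trivial oplus1_rep_def)
next
  case False
  have ps: "fst s permutes {..<Suc m}"
    using Shat_permutes[OF s] by (auto intro: permutes_subset)
  have "permutation (cyc n m)"
    using cyc_permutes[OF nm] permutes_imp_permutation by blast
  then have "sign (fst s \<circ> cyc n m) = sign (fst s) * (-1) ^ (m - n)"
    using Shat_permutation[OF s] by (simp add: sign_compose sign_cyc[OF nm])
  then have "odd (snd s + int (m - n)) \<longleftrightarrow> sign (fst s \<circ> cyc n m) = -1"
    using Shat_odd_iff_sign[OF s]
    by (cases rule: sign_cases[of "fst s"]; cases "even (m - n)") auto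
  then show ?thesis
    using False permutes_compose[OF cyc_permutes[OF nm] ps]
    by (simp add: oplus1_rep_def Shat_iff)
qed

lemma shift_perm_cyc_commute:
  assumes h: "h permutes {..<m - n}" and nm: "n \<le> m"
  shows "shift_perm n h \<circ> cyc n m = cyc n m \<circ> shift_perm (Suc n) h"
proof
  fix i
  have fixed: "h j = j" if "m - n \<le> j" for j
    using permutes_not_in[OF h] that by auto
  have bounded: "h (i - Suc n) + Suc n \<le> m" if "n < i" "i \<le> m"
    using permutes_in_image[OF h, of "i - Suc n"] that by auto
  show "(shift_perm n h \<circ> cyc n m) i = (cyc n m \<circ> shift_perm (Suc n) h) i"
    using fixed[of "m - n"] fixed[of "i - n"] fixed[of "i - Suc n"] bounded nm
    by (auto simp: shift_perm_def cyc_def)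
qed

lemma oplus1_rep_hmult_i2:
  assumes nm: "n \<le> m" and h: "h \<in> Shat (m - n)"
  shows "oplus1_rep n m (hmult s (i2 m (m - n) h)) = hmult (oplus1_rep n m s) (i2 (Suc m) (m - n) h)"
  using shift_perm_cyc_commute[OF Shat_permutes[OF h] nm] nm
  by (simp add: oplus1_rep_def hmult_def i2_eq_shift_perm comp_assoc Suc_diff_le)

lemma oplus1_hcoset:
  assumes nm: "n \<le> m"
  shows "oplus1 n m (hcoset m n s) = hcoset (Suc m) (Suc n) (oplus1_rep n m s)"
proof -
  define t where "t = (SOME t. t \<in> hcoset m n s)"
  have "t \<in> hcoset m n s"
    unfolding t_def by (rule someI, rule hcoset_self)
  then obtain h where h: "h \<in> Shat (m - n)" and t: "t = hmult s (i2 m (m - n) h)"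
    by (auto simp: hcoset_iff)
  have "oplus1 n m (hcoset m n s) = hcoset (Suc m) (Suc n) (oplus1_rep n m t)"
    by (simp add: oplus1_def oplus1_rep_def t_def Let_def)
  also have "\<dots> = hcoset (Suc m) (Suc n) (hmult (oplus1_rep n m s) (i2 (Suc m) (Suc m - Suc n) h))"
    by (simp add: t oplus1_rep_hmult_i2[OF nm h])
  also have "\<dots> = hcoset (Suc m) (Suc n) (oplus1_rep n m s)"
    using hcoset_hmult_i2[where m = "Suc m" and n = "Suc n"] h by simp
  finally show ?thesis .
qed

lemma permutes_lessThan_comp_commute:
  fixes p q :: "'a::linorder \<Rightarrow> 'a"
  assumes p: "p permutes {..<c}" and fix_low: "\<And>i. i < c \<Longrightarrow> q i = i"
    and keep_high: "\<And>i. c \<le> i \<Longrightarrow> c \<le> q i"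
  shows "p \<circ> q = q \<circ> p"
proof
  fix i
  show "(p \<circ> q) i = (q \<circ> p) i"
  proof (cases "i < c")
    case True
    then show ?thesis
      using fix_low permutes_in_image[OF p] by simp
  next
    case False
    then have "c \<le> q i"
      by (simp add: keep_high not_less)
    then show ?thesis
      using False permutes_not_in[OF p, of i] permutes_not_in[OF p, of "q i"] by simp
  qed
qed

lemma oplus1_rep_hmult:
  assumes nm: "n \<le> m" and ml: "m \<le> l" and s: "s \<in> Shat m"
  shows "oplus1_rep n l (hmult t s) = hmult (oplus1_rep m l t) (oplus1_rep n m s)"
proof -
  have "fst s \<circ> cyc m l = cyc m l \<circ> fst s"
    using ml by (intro permutes_lessThan_comp_commute[OF Shat_permutes[OF s]]) (auto simp: cyc_def)
  then have "fst t \<circ> fst s \<circ> cyc n l = fst t \<circ> cyc m l \<circ> (fst s \<circ> cyc n m)"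
    using cyc_comp[OF nm ml] by (metis comp_assoc)
  then show ?thesis
    using nm ml by (simp add: oplus1_rep_def hmult_def)
qed

fun oplusk_rep :: "nat \<Rightarrow> nat \<Rightarrow> nat \<Rightarrow> shat \<Rightarrow> shat" where
  "oplusk_rep 0 n m s = s"
| "oplusk_rep (Suc k) n m s = oplus1_rep (n + k) (m + k) (oplusk_rep k n m s)"

lemma oplusk_hcoset:
  "n \<le> m \<Longrightarrow> oplusk k n m (hcoset m n s) = hcoset (m + k) (n + k) (oplusk_rep k n m s)"
  by (induction k) (simp_all add: oplus1_hcoset)

lemma oplusk_rep_Shat: "s \<in> Shat m \<Longrightarrow> n \<le> m \<Longrightarrow> oplusk_rep k n m s \<in> Shat (m + k)"
  by (induction k) (simp_all add: oplus1_rep_Shat)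

lemma oplusk_rep_hmult:
  assumes "n \<le> m" and "m \<le> l" and s: "s \<in> Shat m"
  shows "oplusk_rep k n l (hmult t s) = hmult (oplusk_rep k m l t) (oplusk_rep k n m s)"
proof (induction k)
  case 0
  then show ?case by simp
next
  case (Suc k)
  have "oplusk_rep k n m s \<in> Shat (m + k)"
    using oplusk_rep_Shat[OF s \<open>n \<le> m\<close>] .
  then show ?case
    using Suc.IH assms by (simp add: oplus1_rep_hmult)
qed

lemma oplusk_rep_id [simp]: "oplusk_rep k n n (id, 0) = (id, 0)"
  by (induction k) (simp_all add: oplus1_rep_def)

lemma oplusk_rep_hmult_central:
  "oplusk_rep k n m (hmult s (id, c)) = hmult (oplusk_rep k n m s) (id, c)"
  by (induction k) (simp_all add: oplus1_rep_def hmult_def fun_eq_iff)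

lemma oplusk_FIhat: "f \<in> FIhat n m \<Longrightarrow> oplusk k n m f \<in> FIhat (n + k) (m + k)"
  by (auto elim!: FIhatE simp: oplusk_hcoset intro!: hcoset_in_FIhat oplusk_rep_Shat)

lemma Shat_same_perm_even_diff:
  "s \<in> Shat m \<Longrightarrow> t \<in> Shat m \<Longrightarrow> fst s = fst t \<Longrightarrow> even (snd t - snd s)"
  using Shat_odd_iff_sign[of s m] Shat_odd_iff_sign[of t m] by auto

lemma FIhat_same_FI_imageE:
  assumes f: "f \<in> FIhat n m" and f': "f' \<in> FIhat n m" and img: "fst ` f = fst ` f'"
  obtains s j where "s \<in> Shat m" "f = hcoset m n s" "f' = hcoset m n (hmult s (id, 2 * j))"
proof -
  obtain t where t: "t \<in> f'"
    using f' by (auto elim!: FIhatE intro: hcoset_self)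
  then obtain s where s: "s \<in> f" and st: "fst s = fst t"
    using img by (metis imageE imageI)
  have sS: "s \<in> Shat m" and fs: "f = hcoset m n s"
    using FIhat_eq_hcoset[OF f s] by auto
  have tS: "t \<in> Shat m" and ft: "f' = hcoset m n t"
    using FIhat_eq_hcoset[OF f' t] by auto
  obtain j where "snd t - snd s = 2 * j"
    using Shat_same_perm_even_diff[OF sS tS st] by (rule evenE)
  then have "t = hmult s (id, 2 * j)"
    using st by (cases s, cases t) (simp add: hmult_def)
  then show ?thesis
    using that sS fs ft by blast
qed

lemma hcoset_central_hmult:
  assumes "q + 2 \<le> p"
  shows "hcoset p q (hmult (id, 2 * j) u) = hcoset p q u"
proof -
  have "(id, 2 * j) \<in> Shat (p - q)"
    using assms by (simp add: Shat_iff permutes_id)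
  moreover have "hmult (id, 2 * j) u = hmult u (i2 p (p - q) (id, 2 * j))"
    by (simp add: hmult_def i2_eq_shift_perm)
  ultimately show ?thesis
    by (simp add: hcoset_hmult_i2)
qed

lemma zspan_least:
  assumes "S \<subseteq> H" and "0 \<in> H" and "\<And>x y. x \<in> H \<Longrightarrow> y \<in> H \<Longrightarrow> x + y \<in> H"
    and "\<And>x. x \<in> H \<Longrightarrow> - x \<in> H"
  shows "zspan S \<subseteq> H"
  unfolding zspan_def using assms by (intro Inter_lower) blast

context
  fixes V :: "nat \<Rightarrow> 'v::ab_group_add set" and F :: "nat \<Rightarrow> nat \<Rightarrow> shat set \<Rightarrow> 'v \<Rightarrow> 'v"
  assumes M: "FIhat_module V F"
begin

lemma FIhat_module_zero_mem: "0 \<in> V n"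
  using M by (simp add: FIhat_module_def)

lemma FIhat_module_add_mem: "x \<in> V n \<Longrightarrow> y \<in> V n \<Longrightarrow> x + y \<in> V n"
  using M by (simp add: FIhat_module_def)

lemma FIhat_module_uminus_mem: "x \<in> V n \<Longrightarrow> - x \<in> V n"
  using M by (simp add: FIhat_module_def)

lemma FIhat_module_map_mem: "f \<in> FIhat n m \<Longrightarrow> x \<in> V n \<Longrightarrow> F n m f x \<in> V m"
  using M by (simp add: FIhat_module_def)

lemma FIhat_module_map_add:
  "f \<in> FIhat n m \<Longrightarrow> x \<in> V n \<Longrightarrow> y \<in> V n \<Longrightarrow> F n m f (x + y) = F n m f x + F n m f y"
  using M by (simp add: FIhat_module_def)

lemma FIhat_module_map_id: "x \<in> V n \<Longrightarrow> F n n (hcoset n n (id, 0)) x = x"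
  using M by (simp add: FIhat_module_def)

lemma FIhat_module_map_comp:
  "f \<in> FIhat n m \<Longrightarrow> g \<in> FIhat m l \<Longrightarrow> s \<in> f \<Longrightarrow> t \<in> g \<Longrightarrow> x \<in> V n \<Longrightarrow>
    F n l (hcoset l n (hmult t s)) x = F m l g (F n m f x)"
  using M unfolding FIhat_module_def by blast

lemma FIhat_module_map_zero: "f \<in> FIhat n m \<Longrightarrow> F n m f 0 = 0"
  using FIhat_module_map_add[of f n m 0 0] FIhat_module_zero_mem[of n] by simp

lemma FIhat_module_map_uminus: "f \<in> FIhat n m \<Longrightarrow> x \<in> V n \<Longrightarrow> F n m f (- x) = - F n m f x"
  using FIhat_module_map_add[of f n m x "- x"] FIhat_module_uminus_mem[of x n]
    FIhat_module_map_zero[of f n m]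
  by (simp add: eq_neg_iff_add_eq_0 add.commute)

lemma FIhat_module_Sigma: "FIhat_module (SigmaV k V) (SigmaF k F)"
  unfolding FIhat_module_def SigmaV_def SigmaF_def
proof (intro conjI allI impI ballI)
  fix n m l f g s t x
  assume f: "f \<in> FIhat n m" and g: "g \<in> FIhat m l" and s: "s \<in> f" and t: "t \<in> g"
    and x: "x \<in> V (n + k)"
  have nm: "n \<le> m" and sS: "s \<in> Shat m" and fs: "f = hcoset m n s"
    using FIhat_eq_hcoset[OF f s] by auto
  have ml: "m \<le> l" and tS: "t \<in> Shat l" and gt: "g = hcoset l m t"
    using FIhat_eq_hcoset[OF g t] by auto
  let ?s = "oplusk_rep k n m s" and ?t = "oplusk_rep k m l t"
  have "oplusk k n l (hcoset l n (hmult t s)) = hcoset (l + k) (n + k) (hmult ?t ?s)"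
    using nm ml sS by (simp add: oplusk_hcoset oplusk_rep_hmult)
  moreover have "hcoset (m + k) (n + k) ?s \<in> FIhat (n + k) (m + k)"
    using nm sS by (simp add: hcoset_in_FIhat oplusk_rep_Shat)
  moreover have "hcoset (l + k) (m + k) ?t \<in> FIhat (m + k) (l + k)"
    using ml tS by (simp add: hcoset_in_FIhat oplusk_rep_Shat)
  ultimately show "F (n + k) (l + k) (oplusk k n l (hcoset l n (hmult t s))) x =
      F (m + k) (l + k) (oplusk k m l g) (F (n + k) (m + k) (oplusk k n m f) x)"
    using FIhat_module_map_comp[OF _ _ hcoset_self hcoset_self x] nm ml fs gt
    by (simp add: oplusk_hcoset)
qed (use FIhat_module_zero_mem FIhat_module_add_mem FIhat_module_uminus_mem
      FIhat_module_map_mem FIhat_module_map_add FIhat_module_map_id oplusk_FIhat oplusk_hcoset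
      in simp_all)

lemma FIhat_module_central_acts_trivially:
  assumes gen: "gen_degree_le V F a" and p: "a + 2 \<le> p" and x: "x \<in> V p"
  shows "F p p (hcoset p p (id, 2 * j)) x = x"
proof -
  define z where "z = hcoset p p (id, 2 * j)"
  have z: "z \<in> FIhat p p"
    unfolding z_def using p by (intro hcoset_in_FIhat) (simp_all add: Shat_iff permutes_id)
  define H where "H = {y \<in> V p. F p p z y = y}"
  have "F p p z (F q p g y) = F q p g y" if "q \<le> a" "g \<in> FIhat q p" "y \<in> V q" for q g y
  proof -
    obtain u where u: "u \<in> Shat p" and g_eq: "g = hcoset p q u"
      using \<open>g \<in> FIhat q p\<close> by (rule FIhatE)
    have "F p p z (F q p g y) = F q p (hcoset p q (hmult (id, 2 * j) u)) y"
      using FIhat_module_map_comp[OF that(2) z _ _ that(3)] by (simp add: g_eq z_def hcoset_self)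
    also have "\<dots> = F q p g y"
      using p that(1) by (simp add: g_eq hcoset_central_hmult)
    finally show ?thesis .
  qed
  then have "{F n p f y | n f y. n \<le> a \<and> f \<in> FIhat n p \<and> y \<in> V n} \<subseteq> H"
    unfolding H_def by (auto intro: FIhat_module_map_mem)
  then have "zspan {F n p f y | n f y. n \<le> a \<and> f \<in> FIhat n p \<and> y \<in> V n} \<subseteq> H"
    by (rule zspan_least)
      (auto simp: H_def z FIhat_module_zero_mem FIhat_module_add_mem FIhat_module_uminus_mem
        FIhat_module_map_zero FIhat_module_map_add FIhat_module_map_uminus)
  then show ?thesis
    using gen x unfolding gen_degree_le_def H_def z_def by blast
qed

lemma SigmaF_eq_if_same_FI_image:
  assumes gen: "gen_degree_le V F a" and k: "a + 2 \<le> k"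
    and f: "f \<in> FIhat n m" and f': "f' \<in> FIhat n m" and img: "fst ` f = fst ` f'"
    and x: "x \<in> SigmaV k V n"
  shows "SigmaF k F n m f x = SigmaF k F n m f' x"
proof -
  obtain s j where s: "s \<in> Shat m" and fs: "f = hcoset m n s"
    and fs': "f' = hcoset m n (hmult s (id, 2 * j))"
    using FIhat_same_FI_imageE[OF f f' img] .
  have nm: "n \<le> m"
    using f by (rule FIhatE)
  have xk: "x \<in> V (n + k)"
    using x by (simp add: SigmaV_def)
  let ?g = "hcoset (m + k) (n + k) (oplusk_rep k n m s)"
    and ?z = "hcoset (n + k) (n + k) (id, 2 * j)"
  have g: "?g \<in> FIhat (n + k) (m + k)"
    using nm s by (simp add: hcoset_in_FIhat oplusk_rep_Shat)
  have z: "?z \<in> FIhat (n + k) (n + k)"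
    using k by (intro hcoset_in_FIhat) (simp_all add: Shat_iff permutes_id)
  have "SigmaF k F n m f' x = F (n + k) (m + k) (hcoset (m + k) (n + k) (hmult (oplusk_rep k n m s) (id, 2 * j))) x"
    by (simp add: SigmaF_def fs' oplusk_hcoset[OF nm] oplusk_rep_hmult_central)
  also have "\<dots> = F (n + k) (m + k) ?g (F (n + k) (n + k) ?z x)"
    by (rule FIhat_module_map_comp[OF z g hcoset_self hcoset_self xk])
  also have "F (n + k) (n + k) ?z x = x"
    using FIhat_module_central_acts_trivially[OF gen _ xk] k by simp
  also have "F (n + k) (m + k) ?g x = SigmaF k F n m f x"
    by (simp add: SigmaF_def fs oplusk_hcoset[OF nm])
  finally show ?thesis ..
qed

end

theorem mainTheorem10:
  fixes V :: "nat \<Rightarrow> 'v::ab_group_add set"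
    and F :: "nat \<Rightarrow> nat \<Rightarrow> shat set \<Rightarrow> 'v \<Rightarrow> 'v"
    and a :: nat
  assumes "FIhat_module V F"
    and "gen_degree_le V F a"
  shows "is_FI_module (SigmaV (a + 2) V) (SigmaF (a + 2) F)"
  unfolding is_FI_module_def
proof
  show "FIhat_module (SigmaV (a + 2) V) (SigmaF (a + 2) F)"
    using assms(1) by (rule FIhat_module_Sigma)
  define N where "N n m P = SigmaF (a + 2) F n m (SOME f. f \<in> FIhat n m \<and> fst ` f = P)" for n m P
  have "SigmaF (a + 2) F n m f x = N n m (fst ` f) x"
    if f: "f \<in> FIhat n m" and x: "x \<in> SigmaV (a + 2) V n" for n m f x
  proof -
    have "\<exists>f'. f' \<in> FIhat n m \<and> fst ` f' = fst ` f"
      using f by blast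
    then have "(SOME f'. f' \<in> FIhat n m \<and> fst ` f' = fst ` f) \<in> FIhat n m \<and>
        fst ` (SOME f'. f' \<in> FIhat n m \<and> fst ` f' = fst ` f) = fst ` f"
      by (rule someI_ex)
    then show ?thesis
      using SigmaF_eq_if_same_FI_image[OF assms order_refl f _ _ x] by (simp add: N_def)
  qed
  then show "\<exists>N. \<forall>n m f. f \<in> FIhat n m \<longrightarrow>
      (\<forall>x\<in>SigmaV (a + 2) V n. SigmaF (a + 2) F n m f x = N n m (fst ` f) x)"
    by blast
qed

end
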